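(* Let $(A,\cdot,[\cdot,\cdot],\alpha)$ be a Hom-Poisson algebra with $\alpha$ invertible, and let $\omega\in\wedge^2A^*$ be nondegenerate (i.e. $\omega^\sharp:A\to A^*$, $\langle\omega^\sharp(x),y\rangle=\omega(x,y)$, is invertible) such that for all $x,y,z\in A$: $\omega(x\cdot y,\alpha(z))+\omega(y\cdot z,\alpha(x))+\omega(z\cdot x,\alpha(y))=0$, $\omega([x,y],\alpha(z))+\omega([y,z],\alpha(x))+\omega([z,x],\alpha(y))=0$, and $\omega(x,y)=\omega(\alpha(x),\alpha(y))$. Then there is a compatible Hom-pre-Poisson algebra structure $(A,\diamond,*,\alpha)$ on $A$ determined by $\omega(x\diamond y,z)=\omega(y,\alpha^{-1}(x)\cdot\alpha^{-2}(z))$ and $\omega(x*y,z)=-\omega(y,[\alpha^{-1}(x),\alpha^{-2}(z)])$ for all $x,y,z\in A$.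
   Context: A Hom-Poisson algebra $(A,\cdot,[\cdot,\cdot],\alpha)$: $(A,\cdot,\alpha)$ commutative Hom-associative (commutative product, $\alpha$ multiplicative, $\alpha(x)\cdot(y\cdot z)=(x\cdot y)\cdot\alpha(z)$), $(A,[\cdot,\cdot],\alpha)$ Hom-Lie (skew bracket, $\alpha$ multiplicative, $[\alpha x,[y,z]]+[\alpha y,[z,x]]+[\alpha z,[x,y]]=0$), and $[\alpha(x),y\cdot z]=[x,y]\cdot\alpha(z)+\alpha(y)\cdot[x,z]$. A Hom-pre-Poisson algebra $(A,\diamond,*,\alpha)$: $\alpha$ multiplicative for both products, $\alpha(x)\diamond(y\diamond z)=(x\diamond y)\diamond\alpha(z)+(y\diamond x)\diamond\alpha(z)$, $(x*y)*\alpha(z)-\alpha(x)*(y*z)=(y*x)*\alpha(z)-\alpha(y)*(x*z)$, $(x*y-y*x)\diamond\alpha(z)=\alpha(x)*(y\diamond z)-\alpha(y)\diamond(x*z)$, $(x\diamond y+y\diamond x)*\alpha(z)=\alpha(x)\diamond(y*z)+\alpha(y)\diamond(x*z)$. It is compatible with $(A,\cdot,[\cdot,\cdot],\alpha)$ if $x\cdot y=x\diamond y+y\diamond x$ and $[x,y]=x*y-y*x$. *)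

theory Defs
  imports Complex_Main
begin

definition bilinear_map ::
  "('k::field \<Rightarrow> 'v::ab_group_add \<Rightarrow> 'v) \<Rightarrow> ('k \<Rightarrow> 'w::ab_group_add \<Rightarrow> 'w) \<Rightarrow> ('v \<Rightarrow> 'v \<Rightarrow> 'w) \<Rightarrow> bool"
  where "bilinear_map s1 s2 f \<longleftrightarrow>
     (\<forall>x. Vector_Spaces.linear s1 s2 (f x)) \<and> (\<forall>y. Vector_Spaces.linear s1 s2 (\<lambda>x. f x y))"

definition hom_poisson ::
  "('k::field \<Rightarrow> 'v::ab_group_add \<Rightarrow> 'v) \<Rightarrow> ('v \<Rightarrow> 'v \<Rightarrow> 'v) \<Rightarrow> ('v \<Rightarrow> 'v \<Rightarrow> 'v) \<Rightarrow> ('v \<Rightarrow> 'v) \<Rightarrow> bool"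
  where "hom_poisson s mul br \<alpha> \<longleftrightarrow>
     Vector_Spaces.linear s s \<alpha> \<and> bilinear_map s s mul \<and> bilinear_map s s br \<and>
     (\<forall>x y. mul x y = mul y x) \<and>
     (\<forall>x y. \<alpha> (mul x y) = mul (\<alpha> x) (\<alpha> y)) \<and>
     (\<forall>x y z. mul (\<alpha> x) (mul y z) = mul (mul x y) (\<alpha> z)) \<and>
     (\<forall>x y. br x y = - br y x) \<and>
     (\<forall>x y. \<alpha> (br x y) = br (\<alpha> x) (\<alpha> y)) \<and>
     (\<forall>x y z. br (\<alpha> x) (br y z) + br (\<alpha> y) (br z x) + br (\<alpha> z) (br x y) = 0) \<and>
     (\<forall>x y z. br (\<alpha> x) (mul y z) = mul (br x y) (\<alpha> z) + mul (\<alpha> y) (br x z))"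

definition hom_pre_poisson ::
  "('k::field \<Rightarrow> 'v::ab_group_add \<Rightarrow> 'v) \<Rightarrow> ('v \<Rightarrow> 'v \<Rightarrow> 'v) \<Rightarrow> ('v \<Rightarrow> 'v \<Rightarrow> 'v) \<Rightarrow> ('v \<Rightarrow> 'v) \<Rightarrow> bool"
  where "hom_pre_poisson s dia st \<alpha> \<longleftrightarrow>
     Vector_Spaces.linear s s \<alpha> \<and> bilinear_map s s dia \<and> bilinear_map s s st \<and>
     (\<forall>x y. \<alpha> (dia x y) = dia (\<alpha> x) (\<alpha> y)) \<and>
     (\<forall>x y. \<alpha> (st x y) = st (\<alpha> x) (\<alpha> y)) \<and>
     (\<forall>x y z. dia (\<alpha> x) (dia y z) = dia (dia x y) (\<alpha> z) + dia (dia y x) (\<alpha> z)) \<and>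
     (\<forall>x y z. st (st x y) (\<alpha> z) - st (\<alpha> x) (st y z) = st (st y x) (\<alpha> z) - st (\<alpha> y) (st x z)) \<and>
     (\<forall>x y z. dia (st x y - st y x) (\<alpha> z) = st (\<alpha> x) (dia y z) - dia (\<alpha> y) (st x z)) \<and>
     (\<forall>x y z. st (dia x y + dia y x) (\<alpha> z) = dia (\<alpha> x) (st y z) + dia (\<alpha> y) (st x z))"

definition compatible_pre_poisson ::
  "('v::ab_group_add \<Rightarrow> 'v \<Rightarrow> 'v) \<Rightarrow> ('v \<Rightarrow> 'v \<Rightarrow> 'v) \<Rightarrow> ('v \<Rightarrow> 'v \<Rightarrow> 'v) \<Rightarrow> ('v \<Rightarrow> 'v \<Rightarrow> 'v) \<Rightarrow> bool"
  where "compatible_pre_poisson dia st mul br \<longleftrightarrow>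
     (\<forall>x y. mul x y = dia x y + dia y x) \<and> (\<forall>x y. br x y = st x y - st y x)"

end

theory Submission
  imports Defs
begin

text \<open>Nondegeneracy of \<omega> lets the two defining identities serve as definitions of \<open>\<diamond>\<close> and \<open>*\<close>.
  Every axiom to be verified is then an equation between vectors, which may be checked after
  pairing both sides with an arbitrary \<open>w\<close>. By the invariance
  \<open>\<omega>(\<alpha> x, y) = \<omega>(x, \<alpha>\<inverse> y)\<close> each pairing becomes \<open>\<omega>(z, -)\<close> of an expression in the
  Hom-Poisson algebra, and the axioms of the Hom-pre-Poisson algebra reduce to rearrangements of
  Hom-associativity, the Hom-Jacobi identity and the Hom-Leibniz rule. The cyclicity conditions
  on \<omega> enter only through compatibility, \<open>x \<cdot> y = x \<diamond> y + y \<diamond> x\<close> and \<open>[x, y] = x * y - y * x\<close>.\<close>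

locale bilinear_op =
  fixes s1 :: "'k::field \<Rightarrow> 'v::ab_group_add \<Rightarrow> 'v"
    and s2 :: "'k \<Rightarrow> 'w::ab_group_add \<Rightarrow> 'w"
    and f :: "'v \<Rightarrow> 'v \<Rightarrow> 'w"
  assumes bilinear: "bilinear_map s1 s2 f"
begin

lemma linear_left: "Vector_Spaces.linear s1 s2 (\<lambda>x. f x y)"
  using bilinear unfolding bilinear_map_def by blast

lemma linear_right: "Vector_Spaces.linear s1 s2 (f x)"
  using bilinear unfolding bilinear_map_def by blast

lemma add_left [simp]: "f (x + x') y = f x y + f x' y"
  and scale_left [simp]: "f (s1 c x) y = s2 c (f x y)"
  and diff_left [simp]: "f (x - x') y = f x y - f x' y"
  and minus_left [simp]: "f (- x) y = - f x y"
  and zero_left [simp]: "f 0 y = 0"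
proof -
  interpret module_hom s1 s2 "\<lambda>x. f x y"
    using linear_left by (simp add: linear_iff_module_hom)
  show "f (x + x') y = f x y + f x' y" "f (s1 c x) y = s2 c (f x y)"
    "f (x - x') y = f x y - f x' y" "f (- x) y = - f x y" "f 0 y = 0"
    using add scale diff neg zero by simp_all
qed

lemma add_right [simp]: "f x (y + y') = f x y + f x y'"
  and scale_right [simp]: "f x (s1 c y) = s2 c (f x y)"
  and diff_right [simp]: "f x (y - y') = f x y - f x y'"
  and minus_right [simp]: "f x (- y) = - f x y"
  and zero_right [simp]: "f x 0 = 0"
proof -
  interpret module_hom s1 s2 "f x"
    using linear_right by (simp add: linear_iff_module_hom)
  show "f x (y + y') = f x y + f x y'" "f x (s1 c y) = s2 c (f x y)"
    "f x (y - y') = f x y - f x y'" "f x (- y) = - f x y" "f x 0 = 0"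
    using add scale diff neg zero by simp_all
qed

end

locale hom_poisson_algebra =
  fixes s :: "'k::field \<Rightarrow> 'v::ab_group_add \<Rightarrow> 'v"
    and mul br :: "'v \<Rightarrow> 'v \<Rightarrow> 'v"
    and \<alpha> :: "'v \<Rightarrow> 'v"
  assumes hom_poisson: "hom_poisson s mul br \<alpha>"
begin

lemma linear_twist: "Vector_Spaces.linear s s \<alpha>"
  and mul_commute: "mul x y = mul y x"
  and twist_mul: "\<alpha> (mul x y) = mul (\<alpha> x) (\<alpha> y)"
  and mul_hom_assoc: "mul (\<alpha> x) (mul y z) = mul (mul x y) (\<alpha> z)"
  and br_skew: "br x y = - br y x"
  and twist_br: "\<alpha> (br x y) = br (\<alpha> x) (\<alpha> y)"
  and br_hom_jacobi: "br (\<alpha> x) (br y z) + br (\<alpha> y) (br z x) + br (\<alpha> z) (br x y) = 0"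
  and br_mul_hom_leibniz: "br (\<alpha> x) (mul y z) = mul (br x y) (\<alpha> z) + mul (\<alpha> y) (br x z)"
  using hom_poisson unfolding hom_poisson_def by blast+

sublocale mul: bilinear_op s s mul
  using hom_poisson unfolding hom_poisson_def by unfold_locales blast

sublocale br: bilinear_op s s br
  using hom_poisson unfolding hom_poisson_def by unfold_locales blast

lemma mul_hom_assoc_swap: "mul (\<alpha> y) (mul x z) = mul (mul x y) (\<alpha> z)"
  using mul_hom_assoc[of y x z] by (simp add: mul_commute[of y x])

lemma br_br_twist: "br (br x y) (\<alpha> z) = br (\<alpha> x) (br y z) - br (\<alpha> y) (br x z)"
proof -
  have "br (br x y) (\<alpha> z) = - br (\<alpha> z) (br x y)"
    by (rule br_skew)
  also have "\<dots> = br (\<alpha> x) (br y z) + br (\<alpha> y) (br z x)"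
    using br_hom_jacobi[of x y z] by (simp add: neg_eq_iff_add_eq_0 ac_simps)
  finally show ?thesis
    using br_skew[of z x] by simp
qed

lemma mul_br_twist: "mul (br x y) (\<alpha> z) = br (\<alpha> x) (mul y z) - mul (\<alpha> y) (br x z)"
  by (simp add: br_mul_hom_leibniz)

lemma br_mul_twist: "br (mul x y) (\<alpha> z) = br (\<alpha> y) (mul x z) + br (\<alpha> x) (mul y z)"
proof -
  have "br (mul x y) (\<alpha> z) = - br (\<alpha> z) (mul x y)"
    by (rule br_skew)
  also have "\<dots> = mul (br x z) (\<alpha> y) + mul (\<alpha> x) (br y z)"
    using br_mul_hom_leibniz[of z x y] br_skew[of z x] br_skew[of z y] by simp
  also have "\<dots> = br (\<alpha> y) (mul x z) + br (\<alpha> x) (mul y z)"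
    using br_mul_hom_leibniz[of y x z] br_mul_hom_leibniz[of x y z] br_skew[of y x]
      mul_commute[of "br x z" "\<alpha> y"] by simp
  finally show ?thesis .
qed

end

locale nondegenerate_alternating_form =
  fixes s :: "'k::field \<Rightarrow> 'v::ab_group_add \<Rightarrow> 'v"
    and \<omega> :: "'v \<Rightarrow> 'v \<Rightarrow> 'k"
  assumes bilinear_form: "bilinear_map s (*) \<omega>"
    and alternating: "\<omega> x x = 0"
    and nondegenerate: "Vector_Spaces.linear s (*) f \<Longrightarrow> \<exists>!u. \<omega> u = f"
begin

sublocale form: bilinear_op s "(*)" \<omega>
  by unfold_locales (rule bilinear_form)

lemma vector_space: "vector_space s"
  and vector_space_scalars: "vector_space ((*) :: 'k \<Rightarrow> 'k \<Rightarrow> 'k)"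
  using form.linear_right unfolding Vector_Spaces.linear_iff by blast+

lemma form_skew: "\<omega> x y = - \<omega> y x"
proof -
  have "\<omega> y x + \<omega> x y = 0"
    using alternating[of "x + y"] alternating[of x] alternating[of y] by simp
  then show ?thesis
    by (metis add.commute eq_neg_iff_add_eq_0)
qed

lemma form_eqI: "(\<And>z. \<omega> u z = \<omega> v z) \<Longrightarrow> u = v"
  using nondegenerate[OF form.linear_right[of v]] by blast

definition represent :: "('v \<Rightarrow> 'k) \<Rightarrow> 'v"
  where "represent f = (THE u. \<omega> u = f)"

lemma form_represent: "Vector_Spaces.linear s (*) f \<Longrightarrow> \<omega> (represent f) = f"
  unfolding represent_def by (rule theI') (rule nondegenerate)

end

locale symplectic_hom_poisson =
  hom_poisson_algebra s mul br \<alpha> + nondegenerate_alternating_form s \<omega>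
  for s :: "'k::field \<Rightarrow> 'v::ab_group_add \<Rightarrow> 'v"
    and mul br :: "'v \<Rightarrow> 'v \<Rightarrow> 'v"
    and \<alpha> :: "'v \<Rightarrow> 'v"
    and \<omega> :: "'v \<Rightarrow> 'v \<Rightarrow> 'k" +
  assumes bij_twist: "bij \<alpha>"
    and form_mul_cyclic: "\<omega> (mul x y) (\<alpha> z) + \<omega> (mul y z) (\<alpha> x) + \<omega> (mul z x) (\<alpha> y) = 0"
    and form_br_cyclic: "\<omega> (br x y) (\<alpha> z) + \<omega> (br y z) (\<alpha> x) + \<omega> (br z x) (\<alpha> y) = 0"
    and form_twist: "\<omega> x y = \<omega> (\<alpha> x) (\<alpha> y)"
begin

abbreviation \<beta> :: "'v \<Rightarrow> 'v" where "\<beta> \<equiv> inv \<alpha>"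

lemma twist_inv [simp]: "\<alpha> (\<beta> x) = x"
  by (simp add: bij_twist bij_is_surj surj_f_inv_f)

lemma inv_twist [simp]: "\<beta> (\<alpha> x) = x"
  by (simp add: bij_twist bij_is_inj inv_f_f)

sublocale inv_twist: module_hom s s \<beta>
  using bij_module_hom_imp_inv_module_hom[OF _ bij_twist] linear_twist
  by (simp add: linear_iff_module_hom)

declare inv_twist.add [simp] inv_twist.scale [simp]

lemma inv_twist_mul [simp]: "\<beta> (mul x y) = mul (\<beta> x) (\<beta> y)"
  by (metis inv_twist twist_inv twist_mul)

lemma inv_twist_br [simp]: "\<beta> (br x y) = br (\<beta> x) (\<beta> y)"
  by (metis inv_twist twist_inv twist_br)

lemma form_twist_left [simp]: "\<omega> (\<alpha> x) y = \<omega> x (\<beta> y)"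
  using form_twist[of x "\<beta> y"] by simp

definition dia :: "'v \<Rightarrow> 'v \<Rightarrow> 'v"
  where "dia x y = represent (\<lambda>z. \<omega> y (mul (\<beta> x) (\<beta> (\<beta> z))))"

definition st :: "'v \<Rightarrow> 'v \<Rightarrow> 'v"
  where "st x y = represent (\<lambda>z. - \<omega> y (br (\<beta> x) (\<beta> (\<beta> z))))"

lemma form_dia [simp]: "\<omega> (dia x y) z = \<omega> y (mul (\<beta> x) (\<beta> (\<beta> z)))"
proof -
  have "Vector_Spaces.linear s (*) (\<lambda>z. \<omega> y (mul (\<beta> x) (\<beta> (\<beta> z))))"
    by (simp add: Vector_Spaces.linear_iff vector_space vector_space_scalars)
  then show ?thesis
    unfolding dia_def by (simp add: form_represent)
qed

lemma form_st [simp]: "\<omega> (st x y) z = - \<omega> y (br (\<beta> x) (\<beta> (\<beta> z)))"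
proof -
  have "Vector_Spaces.linear s (*) (\<lambda>z. - \<omega> y (br (\<beta> x) (\<beta> (\<beta> z))))"
    by (simp add: Vector_Spaces.linear_iff vector_space vector_space_scalars algebra_simps)
  then show ?thesis
    unfolding st_def by (simp add: form_represent)
qed

lemma bilinear_dia: "bilinear_map s s dia"
  unfolding bilinear_map_def Vector_Spaces.linear_iff
  by (auto intro!: form_eqI simp: vector_space)

lemma bilinear_st: "bilinear_map s s st"
  unfolding bilinear_map_def Vector_Spaces.linear_iff
  by (auto intro!: form_eqI simp: vector_space algebra_simps)

lemma twist_dia: "\<alpha> (dia x y) = dia (\<alpha> x) (\<alpha> y)"
  by (rule form_eqI) simp

lemma twist_st: "\<alpha> (st x y) = st (\<alpha> x) (\<alpha> y)"
  by (rule form_eqI) simp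

sublocale dia: bilinear_op s s dia
  by unfold_locales (rule bilinear_dia)

sublocale st: bilinear_op s s st
  by unfold_locales (rule bilinear_st)

lemma mul_eq_dia_sym: "mul x y = dia x y + dia y x"
proof (rule form_eqI)
  fix z
  have "\<omega> (mul x y) z = \<omega> (\<alpha> (mul (\<beta> y) (\<beta> x))) z"
    by (simp only: twist_mul twist_inv mul_commute[of y])
  also have "\<dots> = \<omega> (mul (\<beta> y) (\<beta> x)) (\<beta> z)"
    by (rule form_twist_left)
  also have "\<dots> = - \<omega> (mul (\<beta> x) (\<beta> (\<beta> z))) y - \<omega> (mul (\<beta> (\<beta> z)) (\<beta> y)) x"
    using form_mul_cyclic[of "\<beta> x" "\<beta> (\<beta> z)" "\<beta> y"] by simp algebra
  also have "\<dots> = \<omega> (dia x y + dia y x) z"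
    by (simp add: form_skew[of _ y] form_skew[of _ x] mul_commute[of "\<beta> (\<beta> z)"])
  finally show "\<omega> (mul x y) z = \<omega> (dia x y + dia y x) z" .
qed

lemma br_eq_st_skew: "br x y = st x y - st y x"
proof (rule form_eqI)
  fix z
  have "\<omega> (br x y) z = \<omega> (\<alpha> (br (\<beta> x) (\<beta> y))) z"
    by (simp only: twist_br twist_inv)
  also have "\<dots> = \<omega> (br (\<beta> x) (\<beta> y)) (\<beta> z)"
    by (rule form_twist_left)
  also have "\<dots> = \<omega> (br (\<beta> x) (\<beta> (\<beta> z))) y + \<omega> (br (\<beta> (\<beta> z)) (\<beta> y)) x"
    using form_br_cyclic[of "\<beta> x" "\<beta> (\<beta> z)" "\<beta> y"] br_skew[of "\<beta> y" "\<beta> x"]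
    by simp
  also have "\<dots> = \<omega> (st x y - st y x) z"
    by (simp add: form_skew[of _ y] form_skew[of _ x] br_skew[of "\<beta> (\<beta> z)"])
  finally show "\<omega> (br x y) z = \<omega> (st x y - st y x) z" .
qed

lemma dia_hom_assoc: "dia (\<alpha> x) (dia y z) = dia (mul x y) (\<alpha> z)"
proof (rule form_eqI)
  fix w
  show "\<omega> (dia (\<alpha> x) (dia y z)) w = \<omega> (dia (mul x y) (\<alpha> z)) w"
    using mul_hom_assoc_swap[of "\<beta> (\<beta> y)" "\<beta> (\<beta> x)" "\<beta> (\<beta> (\<beta> (\<beta> w)))"] by simp
qed

lemma st_br_twist: "st (br x y) (\<alpha> z) = st (\<alpha> x) (st y z) - st (\<alpha> y) (st x z)"
proof (rule form_eqI)
  fix w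
  show "\<omega> (st (br x y) (\<alpha> z)) w = \<omega> (st (\<alpha> x) (st y z) - st (\<alpha> y) (st x z)) w"
    using br_br_twist[of "\<beta> (\<beta> x)" "\<beta> (\<beta> y)" "\<beta> (\<beta> (\<beta> (\<beta> w)))"] by simp
qed

lemma dia_br_twist: "dia (br x y) (\<alpha> z) = st (\<alpha> x) (dia y z) - dia (\<alpha> y) (st x z)"
proof (rule form_eqI)
  fix w
  show "\<omega> (dia (br x y) (\<alpha> z)) w = \<omega> (st (\<alpha> x) (dia y z) - dia (\<alpha> y) (st x z)) w"
    using mul_br_twist[of "\<beta> (\<beta> x)" "\<beta> (\<beta> y)" "\<beta> (\<beta> (\<beta> (\<beta> w)))"] by simp
qed

lemma st_mul_twist: "st (mul x y) (\<alpha> z) = dia (\<alpha> x) (st y z) + dia (\<alpha> y) (st x z)"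
proof (rule form_eqI)
  fix w
  show "\<omega> (st (mul x y) (\<alpha> z)) w = \<omega> (dia (\<alpha> x) (st y z) + dia (\<alpha> y) (st x z)) w"
    using br_mul_twist[of "\<beta> (\<beta> x)" "\<beta> (\<beta> y)" "\<beta> (\<beta> (\<beta> (\<beta> w)))"] by (simp add: algebra_simps)
qed

lemma compatible_pre_poisson: "compatible_pre_poisson dia st mul br"
  unfolding compatible_pre_poisson_def using mul_eq_dia_sym br_eq_st_skew by blast

lemma hom_pre_poisson: "hom_pre_poisson s dia st \<alpha>"
proof -
  have "dia (\<alpha> x) (dia y z) = dia (dia x y) (\<alpha> z) + dia (dia y x) (\<alpha> z)" for x y z
    by (simp add: dia_hom_assoc mul_eq_dia_sym)
  moreover have "st (st x y) (\<alpha> z) - st (\<alpha> x) (st y z) = st (st y x) (\<alpha> z) - st (\<alpha> y) (st x z)"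
    for x y z
    using st_br_twist[of x y z] by (simp add: br_eq_st_skew algebra_simps)
  moreover have "dia (st x y - st y x) (\<alpha> z) = st (\<alpha> x) (dia y z) - dia (\<alpha> y) (st x z)" for x y z
    by (simp flip: br_eq_st_skew add: dia_br_twist)
  moreover have "st (dia x y + dia y x) (\<alpha> z) = dia (\<alpha> x) (st y z) + dia (\<alpha> y) (st x z)" for x y z
    by (simp flip: mul_eq_dia_sym add: st_mul_twist)
  ultimately show ?thesis
    unfolding hom_pre_poisson_def
    using linear_twist bilinear_dia bilinear_st twist_dia twist_st by blast
qed

end

theorem theorem5p10:
  fixes s :: "'k::field \<Rightarrow> 'v::ab_group_add \<Rightarrow> 'v"
    and mul br :: "'v \<Rightarrow> 'v \<Rightarrow> 'v"
    and \<alpha> :: "'v \<Rightarrow> 'v"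
    and \<omega> :: "'v \<Rightarrow> 'v \<Rightarrow> 'k"
  assumes vs: "vector_space s"
    and hp: "hom_poisson s mul br \<alpha>"
    and inv: "bij \<alpha>"
    and bil: "bilinear_map s (*) \<omega>"
    and alt: "\<forall>x. \<omega> x x = 0"
    and nondeg: "\<forall>f. Vector_Spaces.linear s (*) f \<longrightarrow> (\<exists>!x. \<omega> x = f)"
    and c1: "\<forall>x y z. \<omega> (mul x y) (\<alpha> z) + \<omega> (mul y z) (\<alpha> x) + \<omega> (mul z x) (\<alpha> y) = 0"
    and c2: "\<forall>x y z. \<omega> (br x y) (\<alpha> z) + \<omega> (br y z) (\<alpha> x) + \<omega> (br z x) (\<alpha> y) = 0"
    and c3: "\<forall>x y. \<omega> x y = \<omega> (\<alpha> x) (\<alpha> y)"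
  shows "\<exists>dia st. hom_pre_poisson s dia st \<alpha> \<and> compatible_pre_poisson dia st mul br \<and>
     (\<forall>x y z. \<omega> (dia x y) z = \<omega> y (mul (inv \<alpha> x) (inv \<alpha> (inv \<alpha> z)))) \<and>
     (\<forall>x y z. \<omega> (st x y) z = - \<omega> y (br (inv \<alpha> x) (inv \<alpha> (inv \<alpha> z))))"
proof -
  interpret symplectic_hom_poisson s mul br \<alpha> \<omega>
    using hp inv bil alt nondeg c1 c2 c3 by unfold_locales blast+
  show ?thesis
    using hom_pre_poisson compatible_pre_poisson form_dia form_st by blast
qed

end
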